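(* Let $F=\sum_{g\ge0}\lambda^{2g-2}F_g$ be the dessin free energy (defined in the context) and define $$G_{0,2}(x_1,x_2)=\sum_{a,b\ge1} ab\,\frac{\partial^2F_0}{\partial p_a\partial p_b}\Big|_{p=0}\,x_1^{-a-1}x_2^{-b-1}.$$ Then, as formal series in $x_1^{-1},x_2^{-1}$, $$G_{0,2}(x_1,x_2)=\frac{1-\frac{s(u+v)}{x_1}-\frac{s(u+v)}{x_2}+\frac{s^2(u-v)^2}{x_1x_2}}{2(x_1-x_2)^2\sqrt{\Big(1-\frac{2s(u+v)}{x_1}+\frac{s^2(u-v)^2}{x_1^2}\Big)\Big(1-\frac{2s(u+v)}{x_2}+\frac{s^2(u-v)^2}{x_2^2}\Big)}}-\frac{1}{2(x_1-x_2)^2},$$ where the square roots are the power series in $x_i^{-1}$ with constant term $1$.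
   Context: Let $s,u,v$ be parameters and $\lambda$ a genus-tracking parameter. For $n\ge0$ define $$L_n=-\frac{n+1}{s}\frac{\partial}{\partial p_{n+1}}+(u+v)n\frac{\partial}{\partial p_n}+\sum_{j\ge1}p_j(n+j)\frac{\partial}{\partial p_{n+j}}+\lambda^2\sum_{i+j=n,\ i,j\ge1}ij\frac{\partial^2}{\partial p_i\partial p_j}+\delta_{n,0}\,uv\,\lambda^{-2}.$$ The dessin free energy $F=\sum_{g\ge0}\lambda^{2g-2}F_g$ (logarithm of the Kazarian–Zograf generating series of Grothendieck's dessins d'enfants, each $F_g$ a formal power series in $p_1,p_2,\dots$ vanishing at $p=0$) is characterized by $L_ne^F=0$ for all $n\ge0$. *)

theory Defs
  imports "HOL-Library.Multiset" "HOL-Computational_Algebra.Formal_Power_Series"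
begin

text \<open>Formal power series in the infinitely many variables p_1, p_2, ... are
represented by their coefficient functions: a monomial
p_{m_1} ... p_{m_k} is encoded by the multiset of indices, and a series is
f :: nat multiset => real, with the coefficient of p^mu being f mu
(no symmetry factors).  Only multisets of positive indices are meaningful.\<close>

type_synonym pseries = "nat multiset \<Rightarrow> real"

definition pderiv_p :: "nat \<Rightarrow> pseries \<Rightarrow> pseries" where
  "pderiv_p k f = (\<lambda>\<mu>. real (count \<mu> k + 1) * f (\<mu> + {#k#}))"

definition pmult :: "pseries \<Rightarrow> pseries \<Rightarrow> pseries" where
  "pmult f g = (\<lambda>\<mu>. \<Sum>\<nu>\<in>{\<nu>. \<nu> \<subseteq># \<mu>}. f \<nu> * g (\<mu> - \<nu>))"

text \<open>The coefficient at p^mu of the operator  sum_{j>=1} p_j (n+j) d/dp_{n+j}  applied to f.\<close>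
definition euler_part :: "nat \<Rightarrow> pseries \<Rightarrow> pseries" where
  "euler_part n f = (\<lambda>\<mu>. \<Sum>j\<in>{j\<in>set_mset \<mu>. 1 \<le> j}.
       real (n + j) * pderiv_p (n + j) f (\<mu> - {#j#}))"

text \<open>Genus expansion of  e^{-F} L_n e^F = 0, where F = sum_g lambda^(2g-2) F_g:
the coefficient of lambda^(2g-2) at the monomial p^mu.\<close>
definition dessin_constraint ::
    "real \<Rightarrow> real \<Rightarrow> real \<Rightarrow> (nat \<Rightarrow> pseries) \<Rightarrow> nat \<Rightarrow> nat \<Rightarrow> pseries" where
  "dessin_constraint s u v F n g = (\<lambda>\<mu>.
      - (real (n + 1) / s) * pderiv_p (n + 1) (F g) \<mu>
      + (u + v) * real n * pderiv_p n (F g) \<mu>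
      + euler_part n (F g) \<mu>
      + (\<Sum>i\<in>{1..<n}. real i * real (n - i) *
           ((if 1 \<le> g then pderiv_p i (pderiv_p (n - i) (F (g - 1))) \<mu> else 0)
            + (\<Sum>h\<le>g. pmult (pderiv_p i (F h)) (pderiv_p (n - i) (F (g - h))) \<mu>)))
      + (if n = 0 \<and> g = 0 \<and> \<mu> = {#} then u * v else 0))"

definition is_dessin_free_energy ::
    "real \<Rightarrow> real \<Rightarrow> real \<Rightarrow> (nat \<Rightarrow> pseries) \<Rightarrow> bool" where
  "is_dessin_free_energy s u v F \<longleftrightarrow>
     (\<forall>g \<mu>. 0 \<in># \<mu> \<longrightarrow> F g \<mu> = 0) \<and>
     (\<forall>g. F g {#} = 0) \<and>
     (\<forall>n g \<mu>. 0 \<notin># \<mu> \<longrightarrow> dessin_constraint s u v F n g \<mu> = 0)"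

text \<open>Bivariate formal power series in y1 = 1/x1 (outer) and y2 = 1/x2 (inner).\<close>
definition emb1 :: "real fps \<Rightarrow> real fps fps" where
  "emb1 a = Abs_fps (\<lambda>m. fps_const (fps_nth a m))"

definition emb2 :: "real fps \<Rightarrow> real fps fps" where
  "emb2 a = fps_const a"

definition Y1 :: "real fps fps" where "Y1 = fps_X"
definition Y2 :: "real fps fps" where "Y2 = fps_const fps_X"

definition G02 :: "(nat \<Rightarrow> pseries) \<Rightarrow> real fps fps" where
  "G02 F = Abs_fps (\<lambda>m. Abs_fps (\<lambda>n.
      if 2 \<le> m \<and> 2 \<le> n then
        real (m - 1) * real (n - 1) * pderiv_p (m - 1) (pderiv_p (n - 1) (F 0)) {#}
      else 0))"

definition Pdisc :: "real \<Rightarrow> real \<Rightarrow> real \<Rightarrow> real fps" where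
  "Pdisc s u v = 1 - fps_const (2 * s * (u + v)) * fps_X + fps_const (s^2 * (u - v)^2) * fps_X ^ 2"

definition sqrtP :: "real \<Rightarrow> real \<Rightarrow> real \<Rightarrow> real fps" where
  "sqrtP s u v = fps_radical (\<lambda>_ _. 1) 2 (Pdisc s u v)"

end

(* Only genus zero at p = 0 enters. The genus-0 constraints at the monomials 1 and p_b give
   recursions for c_a = a dF_0/dp_a and for the coefficients a b d^2F_0/dp_a dp_b of G_{0,2}.
   For C(y) = sum c_a y^a (with y = 1/x) the first reads C = s y ((u+v) C + C^2 + uv);
   completing the square shows that 1 - s(u+v) y - 2 s y C is the square root sqrt(P(y)) of
   the discriminant. For the two-point series D the second is linear,
   sqrt(P(y1)) D = s y1 H, where H is a divided difference of C and hence of sqrt(P).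
   Eliminating H and using sqrt(P) sqrt(P)' = P'/2 gives the closed form. *)

theory Submission
  imports Defs
begin

unbundle fps_syntax

lemma pderiv_p_at_empty: "pderiv_p k f {#} = f {#k#}"
  by (simp add: pderiv_p_def)

lemma pderiv_p_at_singleton: "pderiv_p a f {#b#} = pderiv_p a (pderiv_p b f) {#}"
  by (simp add: pderiv_p_def add_mset_commute)

lemma euler_part_at_empty: "euler_part n f {#} = 0"
  by (simp add: euler_part_def)

lemma euler_part_at_singleton:
  assumes "1 \<le> b"
  shows "euler_part n f {#b#} = real (n + b) * f {#n + b#}"
proof -
  have "{j \<in> set_mset {#b#}. 1 \<le> j} = {b}" using assms by auto
  then show ?thesis unfolding euler_part_def by (simp add: pderiv_p_def)
qed

lemma pmult_at_empty: "pmult f g {#} = f {#} * g {#}"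
  by (simp add: pmult_def)

lemma submultisets_singleton: "{\<nu>. \<nu> \<subseteq># {#b#}} = {{#}, {#b#}}"
proof (rule set_eqI, rule iffI)
  fix \<nu> assume "\<nu> \<in> {\<nu>. \<nu> \<subseteq># {#b#}}"
  then show "\<nu> \<in> {{#}, {#b#}}" by (cases \<nu>) auto
qed auto

lemma pmult_at_singleton: "pmult f g {#b#} = f {#} * g {#b#} + f {#b#} * g {#}"
  by (simp add: pmult_def submultisets_singleton)

lemma sum_convolution_drop_ends:
  fixes g h :: "nat \<Rightarrow> 'a::semiring_0"
  assumes "g 0 = 0" "h 0 = 0"
  shows "(\<Sum>i=0..n. g i * h (n - i)) = (\<Sum>i\<in>{1..<n}. g i * h (n - i))"
proof (rule sum.mono_neutral_right)
  show "\<forall>i\<in>{0..n} - {1..<n}. g i * h (n - i) = 0"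
    using assms by (auto simp: not_less_eq_eq)
qed auto

definition one_point_coeff :: "(nat \<Rightarrow> pseries) \<Rightarrow> nat \<Rightarrow> real" where
  "one_point_coeff F a = real a * F 0 {#a#}"

definition two_point_coeff :: "(nat \<Rightarrow> pseries) \<Rightarrow> nat \<Rightarrow> nat \<Rightarrow> real" where
  "two_point_coeff F a b = real a * real b * pderiv_p a (pderiv_p b (F 0)) {#}"

lemma one_point_coeff_Suc:
  assumes "s \<noteq> 0" and "is_dessin_free_energy s u v F"
  shows "one_point_coeff F (Suc n) = s * ((u + v) * one_point_coeff F n
           + (\<Sum>i=0..n. one_point_coeff F i * one_point_coeff F (n - i))
           + (if n = 0 then u * v else 0))"
proof -
  have "dessin_constraint s u v F n 0 {#} = 0"
    using assms(2) unfolding is_dessin_free_energy_def by auto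
  then have "one_point_coeff F (Suc n) / s = (u + v) * one_point_coeff F n
           + (\<Sum>i\<in>{1..<n}. one_point_coeff F i * one_point_coeff F (n - i))
           + (if n = 0 then u * v else 0)"
    by (simp add: dessin_constraint_def pderiv_p_at_empty euler_part_at_empty pmult_at_empty
        one_point_coeff_def algebra_simps)
  moreover have "(\<Sum>i=0..n. one_point_coeff F i * one_point_coeff F (n - i))
      = (\<Sum>i\<in>{1..<n}. one_point_coeff F i * one_point_coeff F (n - i))"
    by (rule sum_convolution_drop_ends) (simp_all add: one_point_coeff_def)
  ultimately show ?thesis using assms(1) by (simp add: field_simps)
qed

lemma two_point_coeff_Suc:
  assumes "s \<noteq> 0" and "is_dessin_free_energy s u v F" and "1 \<le> b"
  shows "two_point_coeff F (Suc n) b = s * ((u + v) * two_point_coeff F n b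
           + real b * one_point_coeff F (n + b)
           + 2 * (\<Sum>i=0..n. one_point_coeff F i * two_point_coeff F (n - i) b))"
proof -
  let ?c = "one_point_coeff F" and ?d = "\<lambda>a. two_point_coeff F a b"
  let ?e = "\<lambda>a. pderiv_p a (pderiv_p b (F 0)) {#}"
  define E where "E = (\<Sum>i\<in>{1..<n}.
      real i * real (n - i) * (F 0 {#i#} * ?e (n - i) + ?e i * F 0 {#n - i#}))"
  have "0 \<notin># {#b#}" using assms(3) by auto
  then have "dessin_constraint s u v F n 0 {#b#} = 0"
    using assms(2) unfolding is_dessin_free_energy_def by blast
  then have constraint: "real (n + 1) / s * ?e (n + 1)
      = (u + v) * real n * ?e n + real (n + b) * F 0 {#n + b#} + E"
    using assms(3) unfolding dessin_constraint_def E_def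
    by (simp add: pderiv_p_at_singleton[of _ "F 0"] pderiv_p_at_empty[of _ "F 0"]
        euler_part_at_singleton pmult_at_singleton)
  have "?d (Suc n) / s = real b * (real (n + 1) / s * ?e (n + 1))"
    by (simp add: two_point_coeff_def)
  also have "\<dots> = (u + v) * ?d n + real b * ?c (n + b) + real b * E"
    unfolding constraint by (simp add: one_point_coeff_def two_point_coeff_def algebra_simps)
  finally have "?d (Suc n) / s = (u + v) * ?d n + real b * ?c (n + b) + real b * E" .
  moreover have "real b * E = (\<Sum>i\<in>{1..<n}. ?c i * ?d (n - i) + ?d i * ?c (n - i))"
    unfolding E_def sum_distrib_left
    by (rule sum.cong) (simp_all add: one_point_coeff_def two_point_coeff_def algebra_simps)
  moreover have "(\<Sum>i\<in>{1..<n}. ?c i * ?d (n - i) + ?d i * ?c (n - i))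
      = 2 * (\<Sum>i=0..n. ?c i * ?d (n - i))"
  proof -
    have "?c 0 = 0" and "?d 0 = 0"
      by (simp_all add: one_point_coeff_def two_point_coeff_def)
    then have "(\<Sum>i\<in>{1..<n}. ?c i * ?d (n - i) + ?d i * ?c (n - i))
        = (\<Sum>i=0..n. ?c i * ?d (n - i)) + (\<Sum>i=0..n. ?d i * ?c (n - i))"
      by (simp add: sum.distrib sum_convolution_drop_ends[of ?c ?d]
          sum_convolution_drop_ends[of ?d ?c])
    moreover have "(\<Sum>i=0..n. ?d i * ?c (n - i)) = (\<Sum>i=0..n. ?c i * ?d (n - i))"
      by (subst sum.atLeastAtMost_rev) (simp add: mult.commute)
    ultimately show ?thesis by simp
  qed
  ultimately show ?thesis using assms(1) by (simp add: field_simps)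
qed

lemma square_completion_of_quadratic_fixpoint:
  fixes a p q x c :: "'a::comm_ring_1"
  assumes "c = a * x * (p * c + c * c + q)"
  shows "(1 - a * p * x - 2 * a * x * c)\<^sup>2 = 1 - 2 * a * p * x + a\<^sup>2 * (p\<^sup>2 - 4 * q) * x\<^sup>2"
proof -
  have "(1 - a * p * x - 2 * a * x * c)\<^sup>2 - (1 - 2 * a * p * x + a\<^sup>2 * (p\<^sup>2 - 4 * q) * x\<^sup>2)
      = - 4 * a * x * (c - a * x * (p * c + c * c + q))"
    by (simp add: algebra_simps power2_eq_square)
  then show ?thesis using assms by simp
qed

lemma sqrtP_unique:
  assumes "W\<^sup>2 = Pdisc s u v" and "W $ 0 = 1"
  shows "W = sqrtP s u v"
  unfolding sqrtP_def numeral_2_eq_2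
  using radical_unique[of "\<lambda>_ _. 1" 1 "Pdisc s u v" W] assms
  by (simp add: Pdisc_def numeral_2_eq_2)

lemma sqrtP_squared: "(sqrtP s u v)\<^sup>2 = Pdisc s u v"
  unfolding sqrtP_def using power_radical[of "Pdisc s u v" "\<lambda>_ _. 1" 1]
  by (simp add: Pdisc_def numeral_2_eq_2)

lemma sqrtP_nth_0: "sqrtP s u v $ 0 = 1"
  by (simp add: sqrtP_def Pdisc_def)

lemma sqrtP_mult_deriv:
  "sqrtP s u v * fps_deriv (sqrtP s u v)
     = fps_const (s\<^sup>2 * (u - v)\<^sup>2) * fps_X - fps_const (s * (u + v))"
proof -
  have "2 * (sqrtP s u v * fps_deriv (sqrtP s u v)) = fps_deriv (Pdisc s u v)"
    by (simp flip: sqrtP_squared add: power2_eq_square algebra_simps)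
  also have "\<dots> = 2 * (fps_const (s\<^sup>2 * (u - v)\<^sup>2) * fps_X - fps_const (s * (u + v)))"
    by (rule fps_ext) (simp add: Pdisc_def power2_eq_square fps_mult_nth numeral_fps_const algebra_simps)
  finally show ?thesis
    by (rule mult_left_cancel[THEN iffD1, rotated]) simp
qed

definition one_point_series :: "(nat \<Rightarrow> pseries) \<Rightarrow> real fps" where
  "one_point_series F = Abs_fps (one_point_coeff F)"

lemma one_point_series_fixpoint:
  assumes "s \<noteq> 0" and "is_dessin_free_energy s u v F"
  defines "C \<equiv> one_point_series F"
  shows "C = fps_const s * fps_X * (fps_const (u + v) * C + C * C + fps_const (u * v))"
proof (rule fps_ext)
  fix n
  show "C $ n = (fps_const s * fps_X * (fps_const (u + v) * C + C * C + fps_const (u * v))) $ n"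
  proof (cases n)
    case 0
    then show ?thesis by (simp add: C_def one_point_series_def one_point_coeff_def)
  next
    case (Suc k)
    then show ?thesis using one_point_coeff_Suc[OF assms(1,2), of k]
      by (simp add: C_def one_point_series_def mult.assoc) (simp add: fps_mult_nth)
  qed
qed

lemma sqrtP_eq_one_point_series:
  assumes "s \<noteq> 0" and "is_dessin_free_energy s u v F"
  shows "sqrtP s u v
       = 1 - fps_const (s * (u + v)) * fps_X - fps_const (2 * s) * fps_X * one_point_series F"
proof (rule sqrtP_unique[symmetric])
  let ?C = "one_point_series F"
  have "(1 - fps_const s * fps_const (u + v) * fps_X - 2 * fps_const s * fps_X * ?C)\<^sup>2
      = 1 - 2 * fps_const s * fps_const (u + v) * fps_X
        + (fps_const s)\<^sup>2 * ((fps_const (u + v))\<^sup>2 - 4 * fps_const (u * v)) * fps_X\<^sup>2"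
    by (rule square_completion_of_quadratic_fixpoint[OF one_point_series_fixpoint[OF assms]])
  then show "(1 - fps_const (s * (u + v)) * fps_X - fps_const (2 * s) * fps_X * ?C)\<^sup>2
      = Pdisc s u v"
    by (simp add: Pdisc_def numeral_fps_const power2_eq_square algebra_simps)
qed simp

lemma fps_fps_ext: "(\<And>m n. A $ m $ n = B $ m $ n) \<Longrightarrow> A = B"
  by (rule fps_ext, rule fps_ext) simp

lemma emb1_nth_nth [simp]: "emb1 a $ m $ n = (if n = 0 then a $ m else 0)"
  by (simp add: emb1_def)

lemma emb2_nth_nth [simp]: "emb2 a $ m $ n = (if m = 0 then a $ n else 0)"
  by (simp add: emb2_def)

lemma Y1_mult_nth_nth [simp]: "(Y1 * A) $ m $ n = (if m = 0 then 0 else A $ (m - 1) $ n)"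
  by (simp add: Y1_def)

lemma Y2_mult_nth_nth [simp]: "(Y2 * A) $ m $ n = (if n = 0 then 0 else A $ m $ (n - 1))"
  by (simp add: Y2_def)

lemma emb1_mult_nth_nth: "(emb1 a * B) $ m $ n = (\<Sum>i=0..m. a $ i * B $ (m - i) $ n)"
proof -
  have "(emb1 a * B) $ m = (\<Sum>i=0..m. fps_const (a $ i) * B $ (m - i))"
    by (simp add: fps_mult_nth emb1_def)
  then show ?thesis by (simp add: fps_sum_nth)
qed

lemma emb1_mult: "emb1 (a * b) = emb1 a * emb1 b"
  by (rule fps_fps_ext) (simp add: emb1_mult_nth_nth, simp add: fps_mult_nth)

lemma emb1_diff: "emb1 (a - b) = emb1 a - emb1 b"
  by (rule fps_fps_ext) simp

lemma emb1_one: "emb1 1 = 1"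
  by (rule fps_fps_ext) simp

lemma emb1_fps_const: "emb1 (fps_const c) = fps_const (fps_const c)"
  by (rule fps_fps_ext) simp

lemma emb1_fps_X: "emb1 fps_X = Y1"
  by (rule fps_fps_ext) (simp add: Y1_def)

lemma emb2_mult: "emb2 (a * b) = emb2 a * emb2 b"
  by (simp add: emb2_def)

lemma emb2_add: "emb2 (a + b) = emb2 a + emb2 b"
  by (simp add: emb2_def)

lemma emb2_diff: "emb2 (a - b) = emb2 a - emb2 b"
  by (simp add: emb2_def)

lemma emb2_uminus: "emb2 (- a) = - emb2 a"
  by (simp add: emb2_def)

lemma emb2_power: "emb2 (a ^ n) = emb2 a ^ n"
  by (simp add: emb2_def)

lemma emb2_one: "emb2 1 = 1"
  by (simp add: emb2_def)

lemma emb2_fps_const: "emb2 (fps_const c) = fps_const (fps_const c)"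
  by (simp add: emb2_def)

lemma emb2_fps_X: "emb2 fps_X = Y2"
  by (simp add: emb2_def Y2_def)

(* Otherwise these rules rewrite (Y1 * A) $ 0 before Y1_mult_nth_nth and Y2_mult_nth_nth apply. *)
declare fps_mult_nth_0 [simp del] fps_mult_nth_1' [simp del]

definition two_point_series :: "(nat \<Rightarrow> pseries) \<Rightarrow> real fps fps" where
  "two_point_series F = Abs_fps (\<lambda>m. Abs_fps (\<lambda>n. two_point_coeff F m n))"

definition euler_term_series :: "(nat \<Rightarrow> pseries) \<Rightarrow> real fps fps" where
  "euler_term_series F = Abs_fps (\<lambda>m. Abs_fps (\<lambda>n. real n * one_point_coeff F (m + n)))"

lemma G02_eq_two_point_series: "G02 F = Y1 * Y2 * two_point_series F"
proof (rule fps_fps_ext)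
  fix m n
  show "G02 F $ m $ n = (Y1 * Y2 * two_point_series F) $ m $ n"
    by (cases m; cases n) (auto simp: G02_def two_point_series_def two_point_coeff_def mult.assoc)
qed

lemma two_point_series_fixpoint:
  assumes "s \<noteq> 0" and "is_dessin_free_energy s u v F"
  defines "D \<equiv> two_point_series F"
  shows "D = fps_const (fps_const s) * Y1 * (fps_const (fps_const (u + v)) * D + euler_term_series F
           + 2 * (emb1 (one_point_series F) * D))"
proof (rule fps_fps_ext)
  fix m n
  show "D $ m $ n = (fps_const (fps_const s) * Y1 * (fps_const (fps_const (u + v)) * D
      + euler_term_series F + 2 * (emb1 (one_point_series F) * D))) $ m $ n"
  proof (cases m)
    case 0
    then show ?thesis by (simp add: mult.assoc D_def two_point_series_def two_point_coeff_def)
  next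
    case (Suc k)
    show ?thesis
    proof (cases "n = 0")
      case True
      then show ?thesis using Suc
        by (simp add: mult.assoc D_def two_point_series_def euler_term_series_def
            two_point_coeff_def emb1_mult_nth_nth numeral_fps_const)
    next
      case False
      then show ?thesis using Suc two_point_coeff_Suc[OF assms(1,2), of n k]
        by (simp add: mult.assoc D_def two_point_series_def euler_term_series_def
            emb1_mult_nth_nth one_point_series_def numeral_fps_const)
    qed
  qed
qed

(* H(y1, y2) = y2 d/dy2 of (y1 C(y1) - y2 C(y2)) / (y1 - y2), compared coefficientwise. *)
lemma euler_term_series_identity:
  fixes F :: "nat \<Rightarrow> pseries"
  defines "H \<equiv> euler_term_series F" and "C \<equiv> one_point_series F"
  shows "(Y1 - Y2)\<^sup>2 * H
       = Y2 * (Y1 * emb1 C - Y1 * emb2 C - (Y1 - Y2) * Y2 * emb2 (fps_deriv C))"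
proof -
  have "Y1 * (Y1 * H) - 2 * (Y1 * (Y2 * H)) + Y2 * (Y2 * H)
      = Y2 * (Y1 * emb1 C) - Y2 * (Y1 * emb2 C) - Y2 * (Y1 * (Y2 * emb2 (fps_deriv C)))
        + Y2 * (Y2 * (Y2 * emb2 (fps_deriv C)))"
  proof (rule fps_fps_ext)
    fix m n
    have "one_point_coeff F 0 = 0" by (simp add: one_point_coeff_def)
    moreover have "m = 0 \<or> m = 1 \<or> (\<exists>k. m = Suc (Suc k))" by presburger
    moreover have "n = 0 \<or> n = 1 \<or> (\<exists>j. n = Suc (Suc j))" by presburger
    ultimately show "(Y1 * (Y1 * H) - 2 * (Y1 * (Y2 * H)) + Y2 * (Y2 * H)) $ m $ n
      = (Y2 * (Y1 * emb1 C) - Y2 * (Y1 * emb2 C) - Y2 * (Y1 * (Y2 * emb2 (fps_deriv C)))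
        + Y2 * (Y2 * (Y2 * emb2 (fps_deriv C)))) $ m $ n"
      by (elim disjE exE conjE)
        (simp_all add: H_def C_def euler_term_series_def one_point_series_def
          numeral_fps_const algebra_simps)
  qed
  then show ?thesis by (simp add: power2_eq_square algebra_simps)
qed

lemma emb1_sqrtP:
  assumes "s \<noteq> 0" and "is_dessin_free_energy s u v F"
  shows "emb1 (sqrtP s u v) = 1 - fps_const (fps_const (s * (u + v))) * Y1
           - 2 * fps_const (fps_const s) * Y1 * emb1 (one_point_series F)"
  by (simp add: sqrtP_eq_one_point_series[OF assms] emb1_diff emb1_mult emb1_one emb1_fps_const
      emb1_fps_X numeral_fps_const mult.assoc)

lemma emb1_sqrtP_mult_two_point_series:
  assumes "s \<noteq> 0" and "is_dessin_free_energy s u v F"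
  shows "emb1 (sqrtP s u v) * two_point_series F
       = fps_const (fps_const s) * Y1 * euler_term_series F"
proof -
  let ?a = "fps_const (fps_const s) :: real fps fps"
  let ?p = "fps_const (fps_const (u + v)) :: real fps fps"
  let ?D = "two_point_series F" and ?C = "emb1 (one_point_series F)"
  have "emb1 (sqrtP s u v) * ?D = ?D - ?a * Y1 * (?p * ?D + 2 * (?C * ?D))"
    unfolding emb1_sqrtP[OF assms] by (simp add: algebra_simps)
  also have "\<dots> = ?a * Y1 * euler_term_series F"
    by (subst (1) two_point_series_fixpoint[OF assms]) (simp add: algebra_simps)
  finally show ?thesis .
qed

lemma euler_term_series_eq_sqrtP:
  assumes "s \<noteq> 0" and "is_dessin_free_energy s u v F"
  defines "S \<equiv> sqrtP s u v"
  shows "2 * fps_const (fps_const s) * (Y1 - Y2)\<^sup>2 * euler_term_series F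
       = Y2 * (emb2 S - emb1 S + (Y1 - Y2) * emb2 (fps_deriv S))"
proof -
  let ?a = "fps_const (fps_const s) :: real fps fps"
  let ?A = "fps_const (fps_const (s * (u + v))) :: real fps fps"
  let ?C = "one_point_series F"
  have S2: "emb2 S = 1 - ?A * Y2 - 2 * ?a * Y2 * emb2 ?C"
    by (simp add: S_def sqrtP_eq_one_point_series[OF assms(1,2)] emb2_diff emb2_mult emb2_one
        emb2_fps_const emb2_fps_X numeral_fps_const mult.assoc)
  have S2': "emb2 (fps_deriv S) = - ?A - 2 * ?a * (emb2 ?C + Y2 * emb2 (fps_deriv ?C))"
    by (simp add: S_def sqrtP_eq_one_point_series[OF assms(1,2)] emb2_diff emb2_add emb2_mult
        emb2_uminus emb2_fps_const emb2_fps_X numeral_fps_const algebra_simps)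
  have S1: "emb1 S = 1 - ?A * Y1 - 2 * ?a * Y1 * emb1 ?C"
    unfolding S_def by (rule emb1_sqrtP[OF assms(1,2)])
  have "2 * ?a * (Y1 - Y2)\<^sup>2 * euler_term_series F
      = 2 * ?a * Y2 * (Y1 * emb1 ?C - Y1 * emb2 ?C - (Y1 - Y2) * Y2 * emb2 (fps_deriv ?C))"
    using euler_term_series_identity[of F] by (simp add: mult.assoc)
  also have "\<dots> = Y2 * (emb2 S - emb1 S + (Y1 - Y2) * emb2 (fps_deriv S))"
    unfolding S1 S2 S2' by algebra
  finally show ?thesis .
qed

lemma two_point_algebraic_identity:
  fixes y1 y2 a A B D H S1 S2 S2' I1 I2 :: "'a::comm_ring_1"
  assumes "S1 * D = a * y1 * H"
    and "2 * a * (y1 - y2)\<^sup>2 * H = y2 * (S2 - S1 + (y1 - y2) * S2')"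
    and "S2\<^sup>2 = 1 - 2 * A * y2 + B * y2\<^sup>2" and "S2 * S2' = B * y2 - A"
    and "S1 * I1 = 1" and "S2 * I2 = 1"
  shows "2 * (y1 - y2)\<^sup>2 * (y1 * y2 * D)
       = y1\<^sup>2 * y2\<^sup>2 * ((1 - A * y1 - A * y2 + B * y1 * y2) * I1 * I2 - 1)"
proof -
  have "2 * (y1 - y2)\<^sup>2 * (y1 * y2 * D) = 2 * (y1 - y2)\<^sup>2 * (y1 * y2 * D) * (S1 * I1) * (S2 * I2)"
    using assms(5,6) by simp
  also have "\<dots> = 2 * (y1 - y2)\<^sup>2 * y1 * y2 * (S1 * D) * S2 * I1 * I2"
    by (simp add: algebra_simps power2_eq_square)
  also have "\<dots> = y1\<^sup>2 * y2 * (2 * a * (y1 - y2)\<^sup>2 * H) * S2 * I1 * I2"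
    unfolding assms(1) by (simp add: algebra_simps power2_eq_square)
  also have "\<dots> = y1\<^sup>2 * y2\<^sup>2 * (S2\<^sup>2 - S1 * S2 + (y1 - y2) * (S2 * S2')) * I1 * I2"
    unfolding assms(2) by (simp add: algebra_simps power2_eq_square)
  also have "\<dots> = y1\<^sup>2 * y2\<^sup>2 * ((1 - A * y1 - A * y2 + B * y1 * y2) * I1 * I2 - (S1 * I1) * (S2 * I2))"
    unfolding assms(3,4) by (simp add: algebra_simps power2_eq_square)
  finally show ?thesis using assms(5,6) by simp
qed

theorem proposition3p1:
  fixes s u v :: real and F :: "nat \<Rightarrow> pseries"
  assumes "s \<noteq> 0"
    and "is_dessin_free_energy s u v F"
  shows "fps_const 2 * (Y1 - Y2)^2 * G02 F
       = Y1^2 * Y2^2 *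
         ((1 - fps_const (fps_const (s * (u + v))) * Y1
             - fps_const (fps_const (s * (u + v))) * Y2
             + fps_const (fps_const (s^2 * (u - v)^2)) * Y1 * Y2)
          * emb1 (inverse (sqrtP s u v)) * emb2 (inverse (sqrtP s u v)) - 1)"
proof -
  let ?S = "sqrtP s u v"
  let ?A = "fps_const (fps_const (s * (u + v))) :: real fps fps"
  let ?B = "fps_const (fps_const (s\<^sup>2 * (u - v)\<^sup>2)) :: real fps fps"
  have "?S * inverse ?S = 1"
    by (simp add: sqrtP_nth_0 inverse_mult_eq_1')
  then have units: "emb1 ?S * emb1 (inverse ?S) = 1" "emb2 ?S * emb2 (inverse ?S) = 1"
    by (metis emb1_mult emb1_one, metis emb2_mult emb2_one)
  have square: "(emb2 ?S)\<^sup>2 = 1 - 2 * ?A * Y2 + ?B * Y2\<^sup>2"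
    unfolding emb2_power[symmetric] sqrtP_squared Pdisc_def
    by (simp add: emb2_add emb2_diff emb2_mult emb2_power emb2_one emb2_fps_const emb2_fps_X
        numeral_fps_const mult.assoc)
  have "emb2 ?S * emb2 (fps_deriv ?S) = ?B * Y2 - ?A"
    unfolding emb2_mult[symmetric] sqrtP_mult_deriv
    by (simp add: emb2_diff emb2_mult emb2_fps_const emb2_fps_X)
  from two_point_algebraic_identity[OF emb1_sqrtP_mult_two_point_series[OF assms]
      euler_term_series_eq_sqrtP[OF assms] square this units]
  show ?thesis by (simp add: G02_eq_two_point_series numeral_fps_const)
qed

end
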